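(* Let $H:\mathbb{R}^{2m}\to\mathbb{R}$ be smooth and consider the canonical Hamiltonian system $\dot x^k=\partial H/\partial p^k$, $\dot p^k=-\partial H/\partial x^k$ ($k=1,\dots,m$). Let $\bar y=(\bar x,\bar p)\in\mathbb{R}^{2m}$ be such that $F'$ is invertible, where $$F'=\begin{pmatrix}H_{px}&H_{pp}\\ -H_{xx}&-H_{xp}\end{pmatrix}=SH_{yy}\quad\text{evaluated at }\bar y.$$ Consider the scheme $$y_{n+1}-y_n=\theta_n\,S\,\bar\nabla_sH(y_n,y_{n+1}),\qquad \theta_n=2(F')^{-1}\tanh\frac{h_nF'}{2}.$$ This scheme is locally exact at $\bar y$.
   Context: Notation: - $y=(x,p)\in\mathbb{R}^{2m}$, $y_n=(x_n,p_n)$, and $h_n$ is the time step. - $S=\begin{pmatrix}0&1\\-1&0\end{pmatrix}$ with $m\times m$ blocks. - $H_{xx},H_{xp},H_{px},H_{pp}$ are the $m\times m$ blocks of the Hessian $H_{yy}$. - $F=SH_y=(H_p,-H_x)^T$ at $\bar y$. $\bar\nabla_sH(y_n,y_{n+1})=\tfrac12\big(\bar\nabla H(y_n,y_{n+1})+\bar\nabla H(y_{n+1},y_n)\big)$ is the symmetrized coordinate increment discrete gradient, where $\bar\nabla H$ has components $$\frac{\Delta H}{\Delta y^j}=\frac{H(\hat y^j_n)-H(\hat y^{j-1}_n)}{y^j_{n+1}-y^j_n},\qquad \hat y^j_n=(y^1_{n+1},\dots,y^j_{n+1},y^{j+1}_n,\dots,y^{2m}_n),$$ with the partial derivative as limit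 when $y^j_{n+1}=y^j_n$. The exact discretization of the linearized system $\dot\nu=F'\nu+F$ (with $\nu=y-\bar y$) is $\nu_{n+1}=e^{h_nF'}\nu_n+(e^{h_nF'}-1)(F')^{-1}F$. The linearization of the scheme at $\bar y$ is obtained as follows: - substitute $y_n=\bar y+\nu_n$ and $y_{n+1}=\bar y+\nu_{n+1}$; - keep $\theta_n$ fixed at its value at $\bar y$; - keep terms to first order in $\nu$. The scheme is locally exact at $\bar y$ if the resulting linear relation coincides with the exact discretization, as a relation determining $\nu_{n+1}$ from $\nu_n$. *)

theory Defs
  imports "HOL-Analysis.Analysis"
begin

text \<open>Phase space R^(2m) is modelled as real^('m + 'm): the coordinate Inl k is x^k,
  the coordinate Inr k is p^k (k ranging over the finite, linearly ordered index type 'm).\<close>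

definition partial :: "(real^'n \<Rightarrow> real) \<Rightarrow> 'n::finite \<Rightarrow> real^'n \<Rightarrow> real" where
  "partial H c y = frechet_derivative H (at y) (axis c 1)"

fun iter_partial :: "'n::finite list \<Rightarrow> (real^'n \<Rightarrow> real) \<Rightarrow> real^'n \<Rightarrow> real" where
  "iter_partial [] H = H"
| "iter_partial (c # cs) H = partial (iter_partial cs H) c"

definition smooth :: "(real^'n::finite \<Rightarrow> real) \<Rightarrow> bool" where
  "smooth H \<longleftrightarrow> (\<forall>cs y. iter_partial cs H differentiable (at y))"

definition grad :: "(real^'n::finite \<Rightarrow> real) \<Rightarrow> real^'n \<Rightarrow> real^'n" where
  "grad H y = (\<chi> c. partial H c y)"

definition hessian :: "(real^'n::finite \<Rightarrow> real) \<Rightarrow> real^'n \<Rightarrow> real^'n^'n" where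
  "hessian H y = jacobian (grad H) (at y)"

definition Smat :: "real^('m::finite + 'm)^('m + 'm)" where
  "Smat = (\<chi> i j. case (i, j) of
              (Inl a, Inr b) \<Rightarrow> (if a = b then 1 else 0)
            | (Inr a, Inl b) \<Rightarrow> (if a = b then -1 else 0)
            | _ \<Rightarrow> 0)"

text \<open>Ordering of the 2m coordinates: y^1..y^2m = x^1..x^m, p^1..p^m.\<close>
definition coords :: "('m::{finite,linorder} + 'm) list" where
  "coords = map Inl (sorted_list_of_set UNIV) @ map Inr (sorted_list_of_set UNIV)"

text \<open>hat y^j: first j coordinates from b (= y_(n+1)), the rest from a (= y_n).\<close>
definition yhat :: "nat \<Rightarrow> real^('m::{finite,linorder} + 'm) \<Rightarrow> real^('m + 'm) \<Rightarrow> real^('m + 'm)" where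
  "yhat j a b = (\<chi> c. if c \<in> set (take j coords) then b $ c else a $ c)"

text \<open>Coordinate increment discrete gradient; the component belonging to the j-th
  coordinate (j = k+1) is the divided difference, or the partial derivative in the limit case.\<close>
definition dgrad :: "(real^('m::{finite,linorder} + 'm) \<Rightarrow> real)
     \<Rightarrow> real^('m + 'm) \<Rightarrow> real^('m + 'm) \<Rightarrow> real^('m + 'm)" where
  "dgrad H a b = (\<Sum>k<length (coords::('m + 'm) list).
     (let c = coords ! k in
       (if b $ c \<noteq> a $ c
        then (H (yhat (Suc k) a b) - H (yhat k a b)) / (b $ c - a $ c)
        else partial H c (yhat k a b))) *\<^sub>R axis (coords ! k) 1)"

definition dgrad_s :: "(real^('m::{finite,linorder} + 'm) \<Rightarrow> real)
     \<Rightarrow> real^('m + 'm) \<Rightarrow> real^('m + 'm) \<Rightarrow> real^('m + 'm)" where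
  "dgrad_s H a b = (1/2) *\<^sub>R (dgrad H a b + dgrad H b a)"

fun matpow :: "real^'n^'n \<Rightarrow> nat \<Rightarrow> real^'n^'n" where
  "matpow A 0 = mat 1"
| "matpow A (Suc k) = A ** matpow A k"

definition mexp :: "real^'n^'n \<Rightarrow> real^'n^'n" where
  "mexp A = (\<Sum>k. (1 / fact k) *\<^sub>R matpow A k)"

definition msinh :: "real^'n^'n \<Rightarrow> real^'n^'n" where
  "msinh A = (1/2) *\<^sub>R (mexp A - mexp (- A))"

definition mcosh :: "real^'n^'n \<Rightarrow> real^'n^'n" where
  "mcosh A = (1/2) *\<^sub>R (mexp A + mexp (- A))"

definition mtanh :: "real^'n^'n \<Rightarrow> real^'n^'n" where
  "mtanh A = msinh A ** matrix_inv (mcosh A)"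

end

theory Submission
  imports Defs
begin

text \<open>Linearised at \<open>ybar\<close>, the symmetrized discrete gradient has the derivative
  \<open>(\<nu>0, \<nu>1) \<mapsto> 1/2 H_yy (\<nu>0 + \<nu>1)\<close>: along each coordinate, a second order Taylor
  expansion writes the divided difference as \<open>\<partial>H\<close> at a staircase point plus
  \<open>\<delta>/2 \<partial>\<^sup>2H\<close>, and symmetrization turns the second term into \<open>\<delta>/2\<close> times a difference
  of two values of a continuous function, which is \<open>o(\<delta>)\<close>. So the linearised scheme is
  the midpoint rule \<open>\<nu>1 - \<nu>0 = \<theta> (F + F' (\<nu>0 + \<nu>1) / 2)\<close>. Multiplying it by
  \<open>cosh (hF'/2)\<close> and using \<open>cosh \<plusminus> sinh = exp (\<plusminus>hF'/2)\<close> gives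
  \<open>exp (-hF'/2) \<nu>1 = exp (hF'/2) \<nu>0 + F'\<^sup>-\<^sup>1 (exp (hF'/2) - exp (-hF'/2)) F\<close>, which is the
  exact step once multiplied by \<open>exp (hF'/2)\<close>.\<close>

lemma matrix_add_rdistrib:
  fixes A B C :: "real^'n::finite^'n"
  shows "(A + B) ** C = A ** C + B ** C"
  by (vector matrix_matrix_mult_def sum.distrib[symmetric] field_simps)

lemma matrix_diff_ldistrib: "(A::real^'n::finite^'n) ** (B - C) = A ** B - A ** C"
  by (vector matrix_matrix_mult_def sum_subtractf[symmetric] field_simps)

lemma matrix_diff_rdistrib: "((A::real^'n::finite^'n) - B) ** C = A ** C - B ** C"
  by (vector matrix_matrix_mult_def sum_subtractf[symmetric] field_simps)

lemma matrix_sum_ldistrib: "(A::real^'n::finite^'n) ** sum f S = (\<Sum>i\<in>S. A ** f i)"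
  by (induct S rule: infinite_finite_induct) (auto simp: matrix_add_ldistrib)

lemma matrix_matrix_mult_nth: "((A::real^'n::finite^'n) ** B) $ i $ j = (\<Sum>l\<in>UNIV. A$i$l * B$l$j)"
  by (simp add: matrix_matrix_mult_def)

lemma matrix_inv_right:
  fixes A :: "real^'n::finite^'n"
  assumes "invertible A"
  shows "A ** matrix_inv A = mat 1"
  using someI_ex[of "\<lambda>A'. A ** A' = mat 1 \<and> A' ** A = mat 1"] assms
  unfolding invertible_def matrix_inv_def by blast

lemma matrix_inv_left:
  fixes A :: "real^'n::finite^'n"
  assumes "invertible A"
  shows "matrix_inv A ** A = mat 1"
  using someI_ex[of "\<lambda>A'. A ** A' = mat 1 \<and> A' ** A = mat 1"] assms
  unfolding invertible_def matrix_inv_def by blast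

lemma matrix_inv_commute:
  fixes A X :: "real^'n::finite^'n"
  assumes "invertible A" "A ** X = X ** A"
  shows "matrix_inv A ** X = X ** matrix_inv A"
proof -
  have "matrix_inv A ** X = matrix_inv A ** X ** (A ** matrix_inv A)"
    by (simp add: matrix_inv_right[OF assms(1)])
  also have "\<dots> = matrix_inv A ** (A ** X) ** matrix_inv A"
    by (simp add: matrix_mul_assoc assms(2))
  also have "\<dots> = X ** matrix_inv A"
    by (simp add: matrix_mul_assoc matrix_inv_left[OF assms(1)])
  finally show ?thesis .
qed

lemma matrix_vector_mult_cancel:
  fixes A :: "real^'n::finite^'n"
  assumes "invertible A"
  shows "A *v x = A *v y \<longleftrightarrow> x = y"
  using inj_matrix_vector_mult[OF assms] by (auto dest: injD)

lemma matpow_commute: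
  fixes A B :: "real^'n::finite^'n"
  assumes "A ** B = B ** A"
  shows "matpow A k ** B = B ** matpow A k"
proof (induction k)
  case 0 then show ?case by simp
next
  case (Suc k)
  have "matpow A (Suc k) ** B = A ** (matpow A k ** B)" by (simp add: matrix_mul_assoc)
  also have "\<dots> = (A ** B) ** matpow A k" using Suc by (simp add: matrix_mul_assoc)
  also have "\<dots> = B ** matpow A (Suc k)" using assms by (simp add: matrix_mul_assoc)
  finally show ?case .
qed

section \<open>The matrix exponential\<close>

definition entry_abs_sum :: "real^'n::finite^'n \<Rightarrow> real" where
  "entry_abs_sum A = (\<Sum>i\<in>UNIV. \<Sum>j\<in>UNIV. \<bar>A$i$j\<bar>)"

lemma entry_abs_sum_nonneg: "0 \<le> entry_abs_sum A"
  unfolding entry_abs_sum_def by (intro sum_nonneg) auto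

lemma row_abs_sum_le_entry_abs_sum: "(\<Sum>j\<in>UNIV. \<bar>A$i$j\<bar>) \<le> entry_abs_sum A"
  unfolding entry_abs_sum_def by (rule member_le_sum) (auto intro: sum_nonneg)

lemma norm_le_entry_abs_sum: "norm (A::real^'n::finite^'n) \<le> entry_abs_sum A"
proof -
  have "norm A \<le> (\<Sum>i\<in>UNIV. \<bar>norm (A$i)\<bar>)"
    by (simp add: norm_vec_def L2_set_le_sum)
  also have "\<dots> \<le> entry_abs_sum A"
    unfolding entry_abs_sum_def by (intro sum_mono) (simp add: norm_le_l1_cart)
  finally show ?thesis .
qed

lemma abs_matpow_nth_le:
  fixes A :: "real^'n::finite^'n"
  shows "\<bar>matpow A k $ i $ j\<bar> \<le> entry_abs_sum A ^ k"
proof (induction k arbitrary: i j)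
  case 0 then show ?case by (simp add: mat_def)
next
  case (Suc k)
  have "\<bar>matpow A (Suc k) $ i $ j\<bar> = \<bar>\<Sum>l\<in>UNIV. A$i$l * matpow A k $ l $ j\<bar>"
    by (simp add: matrix_matrix_mult_nth)
  also have "\<dots> \<le> (\<Sum>l\<in>UNIV. \<bar>A$i$l\<bar> * entry_abs_sum A ^ k)"
    by (rule order_trans[OF sum_abs]) (auto intro!: sum_mono mult_left_mono simp: abs_mult Suc)
  also have "\<dots> = (\<Sum>l\<in>UNIV. \<bar>A$i$l\<bar>) * entry_abs_sum A ^ k"
    by (simp add: sum_distrib_right)
  also have "\<dots> \<le> entry_abs_sum A * entry_abs_sum A ^ k"
    by (rule mult_right_mono[OF row_abs_sum_le_entry_abs_sum]) (simp add: entry_abs_sum_nonneg)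
  finally show ?case by simp
qed

definition mexp_term :: "real^'n::finite^'n \<Rightarrow> nat \<Rightarrow> real^'n^'n" where
  "mexp_term A k = (1 / fact k) *\<^sub>R matpow A k"

lemma abs_mexp_term_nth_le: "\<bar>mexp_term A k $ i $ j\<bar> \<le> entry_abs_sum A ^ k / fact k"
  using abs_matpow_nth_le[of A k i j] by (simp add: mexp_term_def abs_mult divide_right_mono)

lemma summable_abs_mexp_term_nth: "summable (\<lambda>k. \<bar>mexp_term A k $ i $ j\<bar>)"
  by (rule summable_comparison_test[OF _ summable_exp[of "entry_abs_sum A"]])
     (auto intro: abs_mexp_term_nth_le[unfolded divide_inverse mult.commute[of "_ ^ _"]])

lemma summable_norm_mexp_term:
  fixes A :: "real^'n::finite^'n"
  shows "summable (\<lambda>k. norm (mexp_term A k))"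
proof (rule summable_comparison_test)
  show "summable (\<lambda>k. real (CARD('n)) * real (CARD('n)) * (inverse (fact k) * entry_abs_sum A ^ k))"
    by (intro summable_mult summable_exp)
  have "norm (mexp_term A k) \<le> real CARD('n) * real CARD('n) * (inverse (fact k) * entry_abs_sum A ^ k)"
    for k
  proof -
    have "norm (mexp_term A k) \<le> entry_abs_sum (mexp_term A k)"
      by (rule norm_le_entry_abs_sum)
    also have "\<dots> \<le> (\<Sum>i\<in>(UNIV::'n set). \<Sum>j\<in>(UNIV::'n set). entry_abs_sum A ^ k / fact k)"
      unfolding entry_abs_sum_def[of "mexp_term A k"] by (intro sum_mono abs_mexp_term_nth_le)
    finally show ?thesis by (simp add: field_simps)
  qed
  then show "\<exists>N. \<forall>k\<ge>N. norm (norm (mexp_term A k))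
      \<le> real CARD('n) * real CARD('n) * (inverse (fact k) * entry_abs_sum A ^ k)"
    by simp
qed

lemma mexp_sums: "mexp_term A sums mexp A"
  using summable_norm_cancel[OF summable_norm_mexp_term[of A]]
  unfolding mexp_def mexp_term_def[abs_def] by (simp add: summable_sums)

lemma mexp_nth: "mexp A $ i $ j = (\<Sum>k. mexp_term A k $ i $ j)"
  using sums_vec_nth[OF sums_vec_nth[OF mexp_sums[of A]], of i j] by (simp add: sums_iff)

lemma mexp_term_commute:
  fixes A B :: "real^'n::finite^'n"
  assumes "A ** B = B ** A"
  shows "mexp_term A k ** B = B ** mexp_term A k"
  unfolding mexp_term_def
  by (simp add: matrix_scalar_ac scalar_matrix_assoc[symmetric] matpow_commute[OF assms])

lemma mexp_term_Suc: "mexp_term A (Suc k) = (A ** mexp_term A k) /\<^sub>R real (Suc k)"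
  unfolding mexp_term_def
  by (simp add: matrix_scalar_ac scalar_matrix_assoc[symmetric] field_simps del: mult_Suc)

lemma mexp_term_add:
  fixes A B :: "real^'n::finite^'n"
  assumes comm: "A ** B = B ** A"
  shows "mexp_term (A + B) n = (\<Sum>i\<le>n. mexp_term A i ** mexp_term B (n - i))"
proof (induct n)
  case 0
  show ?case by (simp add: mexp_term_def)
next
  case (Suc n)
  let ?S = mexp_term
  have times_S: "X ** ?S X k = real (Suc k) *\<^sub>R ?S X (Suc k)" for X :: "real^'n^'n" and k
    by (simp add: mexp_term_Suc)
  have "real (Suc n) *\<^sub>R ?S (A + B) (Suc n) = (A + B) ** (\<Sum>i\<le>n. ?S A i ** ?S B (n - i))"
    by (metis Suc.hyps times_S)
  also have "\<dots> = (\<Sum>i\<le>n. A ** ?S A i ** ?S B (n - i)) + (\<Sum>i\<le>n. ?S A i ** (B ** ?S B (n - i)))"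
    by (simp add: matrix_add_rdistrib matrix_sum_ldistrib matrix_mul_assoc sum.distrib
        mexp_term_commute[OF comm])
  also have "\<dots> = (\<Sum>i\<le>n. real (Suc i) *\<^sub>R (?S A (Suc i) ** ?S B (n - i)))
                + (\<Sum>i\<le>n. real (Suc n - i) *\<^sub>R (?S A i ** ?S B (Suc n - i)))"
    by (simp add: times_S Suc_diff_le matrix_scalar_ac scalar_matrix_assoc)
  also have "\<dots> = (\<Sum>i\<le>Suc n. real i *\<^sub>R (?S A i ** ?S B (Suc n - i)))
                + (\<Sum>i\<le>Suc n. real (Suc n - i) *\<^sub>R (?S A i ** ?S B (Suc n - i)))"
    by (subst (2) sum.atMost_Suc, subst sum.atMost_Suc_shift) simp
  also have "\<dots> = (\<Sum>i\<le>Suc n. real (Suc n) *\<^sub>R (?S A i ** ?S B (Suc n - i)))"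
    by (simp flip: sum.distrib scaleR_add_left of_nat_add)
  also have "\<dots> = real (Suc n) *\<^sub>R (\<Sum>i\<le>Suc n. ?S A i ** ?S B (Suc n - i))"
    by (simp only: scaleR_right.sum)
  finally show ?case
    by (simp del: sum.cl_ivl_Suc)
qed

lemma mexp_add:
  fixes A B :: "real^'n::finite^'n"
  assumes comm: "A ** B = B ** A"
  shows "mexp (A + B) = mexp A ** mexp B"
proof -
  have "(mexp A ** mexp B) $ i $ j = mexp (A + B) $ i $ j" for i j
  proof -
    let ?c = "\<lambda>l n. \<Sum>k\<le>n. mexp_term A k $ i $ l * mexp_term B (n - k) $ l $ j"
    have "(mexp A ** mexp B) $ i $ j
        = (\<Sum>l\<in>UNIV. (\<Sum>k. mexp_term A k $ i $ l) * (\<Sum>k. mexp_term B k $ l $ j))"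
      by (simp add: matrix_matrix_mult_nth mexp_nth)
    also have "\<dots> = (\<Sum>l\<in>UNIV. \<Sum>n. ?c l n)"
      by (intro sum.cong refl Cauchy_product) (simp_all add: summable_abs_mexp_term_nth)
    also have "\<dots> = (\<Sum>n. \<Sum>l\<in>UNIV. ?c l n)"
      by (rule suminf_sum[symmetric])
         (intro ballI summable_Cauchy_product, simp_all add: summable_abs_mexp_term_nth)
    also have "\<dots> = (\<Sum>n. mexp_term (A + B) n $ i $ j)"
      by (simp add: mexp_term_add[OF comm] matrix_matrix_mult_nth sum.swap[of _ UNIV])
    finally show ?thesis by (simp add: mexp_nth)
  qed
  then show ?thesis by (simp add: vec_eq_iff)
qed

lemma mexp_zero: "mexp (0::real^'n::finite^'n) = mat 1"
proof -
  have "mexp_term (0::real^'n^'n) = (\<lambda>k. if k = 0 then mat 1 else 0)"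
  proof
    show "mexp_term 0 k = (if k = 0 then mat 1 else 0)" for k
      by (cases k) (simp_all add: mexp_term_def)
  qed
  then have "mexp_term (0::real^'n^'n) sums mat 1"
    using sums_single[of 0 "\<lambda>_. mat 1 :: real^'n^'n"] by simp
  then show ?thesis using mexp_sums sums_unique2 by blast
qed

lemma mexp_commute:
  fixes A B :: "real^'n::finite^'n"
  assumes comm: "A ** B = B ** A"
  shows "mexp A ** B = B ** mexp A"
proof -
  have "bounded_linear (\<lambda>M::real^'n^'n. M ** B)"
    by (rule linear_conv_bounded_linear[THEN iffD1], rule linearI)
       (simp_all add: matrix_add_rdistrib scalar_matrix_assoc)
  from bounded_linear.sums[OF this mexp_sums]
  have "(\<lambda>k. mexp_term A k ** B) sums (mexp A ** B)" .
  moreover have "bounded_linear (\<lambda>M::real^'n^'n. B ** M)"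
    by (rule linear_conv_bounded_linear[THEN iffD1], rule linearI)
       (simp_all add: matrix_add_ldistrib matrix_scalar_ac scalar_matrix_assoc[symmetric])
  from bounded_linear.sums[OF this mexp_sums]
  have "(\<lambda>k. B ** mexp_term A k) sums (B ** mexp A)" .
  ultimately show ?thesis using mexp_term_commute[OF comm] sums_unique2 by simp
qed

lemma mexp_scaleR_commute:
  fixes A B :: "real^'n::finite^'n"
  assumes "A ** B = B ** A"
  shows "mexp (c *\<^sub>R A) ** B = B ** mexp (c *\<^sub>R A)"
  by (rule mexp_commute) (simp add: matrix_scalar_ac scalar_matrix_assoc[symmetric] assms)

lemma mexp_mult_mexp_uminus:
  fixes A :: "real^'n::finite^'n"
  shows "mexp A ** mexp (- A) = mat 1" "mexp (- A) ** mexp A = mat 1"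
proof -
  have "A ** (- A) = (- A) ** A"
    using matrix_scalar_ac[of A "-1" A] by (simp add: scalar_matrix_assoc[symmetric])
  then show "mexp A ** mexp (- A) = mat 1" "mexp (- A) ** mexp A = mat 1"
    using mexp_add[of A "- A"] mexp_add[of "- A" A] by (simp_all add: mexp_zero)
qed

section \<open>The tanh-modified midpoint rule is exact for affine systems\<close>

lemma tanh_midpoint_step_iff_exact_step:
  fixes F' :: "real^'n::finite^'n" and F \<nu>0 \<nu>1 :: "real^'n" and h :: real
  assumes inv: "invertible F'"
    and cosh_inv: "invertible (mcosh ((h / 2) *\<^sub>R F'))"
  shows "\<nu>1 - \<nu>0 = (2 *\<^sub>R (matrix_inv F' ** mtanh ((h / 2) *\<^sub>R F')))
                      *v (F + (1/2) *\<^sub>R (F' *v (\<nu>0 + \<nu>1)))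
     \<longleftrightarrow> \<nu>1 = mexp (h *\<^sub>R F') *v \<nu>0 + ((mexp (h *\<^sub>R F') - mat 1) ** matrix_inv F') *v F"
proof -
  define A where "A = (h / 2) *\<^sub>R F'"
  define P where "P = mexp A"
  define Q where "Q = mexp (- A)"
  define C where "C = mcosh A"
  define Sh where "Sh = msinh A"
  define Fi where "Fi = matrix_inv F'"
  define E where "E = mexp (h *\<^sub>R F')"
  define \<theta> where "\<theta> = 2 *\<^sub>R (Fi ** mtanh A)"
  have C_eq: "C = (1/2) *\<^sub>R (P + Q)" by (simp add: C_def P_def Q_def mcosh_def)
  have Sh_eq: "Sh = (1/2) *\<^sub>R (P - Q)" by (simp add: Sh_def P_def Q_def msinh_def)
  have Fi_F': "Fi ** F' = mat 1" by (simp add: Fi_def matrix_inv_left[OF inv])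
  have commute_F': "P ** X = X ** P \<and> Q ** X = X ** Q" if "F' ** X = X ** F'" for X
    using mexp_scaleR_commute[OF that, of "h/2"] mexp_scaleR_commute[OF that, of "-(h/2)"]
    by (simp add: P_def Q_def A_def)
  have P_Fi: "P ** Fi = Fi ** P" and Q_Fi: "Q ** Fi = Fi ** Q"
    using commute_F'[of Fi] matrix_inv_commute[OF inv, of F'] by (auto simp: Fi_def)
  have P_Q: "P ** Q = mat 1" "Q ** P = mat 1"
    unfolding P_def Q_def by (rule mexp_mult_mexp_uminus)+
  have P_P: "P ** P = E"
    using mexp_add[of A A] by (simp add: P_def E_def A_def flip: scaleR_add_left)
  note distrib = matrix_scalar_ac scalar_matrix_assoc[symmetric] matrix_add_rdistrib
     matrix_add_ldistrib matrix_diff_ldistrib matrix_diff_rdistrib scaleR_add_right scaleR_diff_right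
  have Sh_F': "Sh ** F' = F' ** Sh" using commute_F'[of F'] by (simp add: Sh_eq distrib)
  have C_Fi: "C ** Fi = Fi ** C" by (simp add: C_eq distrib P_Fi Q_Fi)
  have C_Sh: "C ** Sh = Sh ** C" by (simp add: C_eq Sh_eq distrib P_Q algebra_simps)
  have C_inv: "invertible C" using cosh_inv by (simp add: C_def A_def)
  have C_theta: "C ** \<theta> = 2 *\<^sub>R (Fi ** Sh)"
  proof -
    have "C ** \<theta> = 2 *\<^sub>R ((C ** Fi) ** Sh ** matrix_inv C)"
      unfolding \<theta>_def mtanh_def C_def[symmetric] Sh_def[symmetric]
      by (simp add: matrix_scalar_ac scalar_matrix_assoc[symmetric] matrix_mul_assoc)
    also have "\<dots> = 2 *\<^sub>R (Fi ** (C ** Sh) ** matrix_inv C)"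
      by (simp add: C_Fi matrix_mul_assoc)
    also have "\<dots> = 2 *\<^sub>R (Fi ** Sh ** (C ** matrix_inv C))"
      by (simp add: C_Sh matrix_mul_assoc)
    finally show ?thesis by (simp add: matrix_inv_right[OF C_inv])
  qed
  have C_theta_F': "C ** (\<theta> ** F') = 2 *\<^sub>R Sh"
  proof -
    have "C ** (\<theta> ** F') = 2 *\<^sub>R (Fi ** (Sh ** F'))"
      by (simp add: matrix_mul_assoc C_theta scalar_matrix_assoc)
    also have "\<dots> = 2 *\<^sub>R Sh"
      by (simp add: Sh_F' matrix_mul_assoc Fi_F')
    finally show ?thesis .
  qed
  have E_Fi: "E ** Fi = Fi ** E"
    unfolding P_P[symmetric] by (metis P_Fi matrix_mul_assoc)
  have P_Fi_Sh: "2 *\<^sub>R (P ** (Fi ** Sh)) = (E - mat 1) ** Fi"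
  proof -
    have "2 *\<^sub>R (P ** (Fi ** Sh)) = (P ** Fi) ** (P - Q)"
      by (simp add: Sh_eq matrix_scalar_ac scalar_matrix_assoc[symmetric] matrix_mul_assoc)
    also have "\<dots> = Fi ** (P ** P - P ** Q)"
      by (simp add: P_Fi matrix_mul_assoc matrix_diff_ldistrib)
    also have "\<dots> = (E - mat 1) ** Fi"
      by (simp add: P_P P_Q matrix_diff_ldistrib matrix_diff_rdistrib E_Fi)
    finally show ?thesis .
  qed
  let ?K = "2 *\<^sub>R (Fi ** Sh) *v F"
  have P_inv: "invertible P" using P_Q unfolding invertible_def by blast
  have "\<nu>1 - \<nu>0 = \<theta> *v (F + (1/2) *\<^sub>R (F' *v (\<nu>0 + \<nu>1)))
      \<longleftrightarrow> C *v (\<nu>1 - \<nu>0) = C *v (\<theta> *v (F + (1/2) *\<^sub>R (F' *v (\<nu>0 + \<nu>1))))"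
    by (rule matrix_vector_mult_cancel[OF C_inv, symmetric])
  also have "\<dots> \<longleftrightarrow> C *v \<nu>1 - C *v \<nu>0 = ?K + Sh *v (\<nu>0 + \<nu>1)"
    by (simp add: matrix_vector_mul_assoc C_theta algebra_simps C_theta_F'
        flip: scaleR_matrix_vector_assoc)
  also have "\<dots> \<longleftrightarrow> (C - Sh) *v \<nu>1 = (C + Sh) *v \<nu>0 + ?K"
    by (auto simp: algebra_simps)
  also have "\<dots> \<longleftrightarrow> Q *v \<nu>1 = P *v \<nu>0 + ?K"
    unfolding C_eq Sh_eq by (simp add: algebra_simps flip: scaleR_add_left)
  also have "\<dots> \<longleftrightarrow> P *v (Q *v \<nu>1) = P *v (P *v \<nu>0 + ?K)"
    by (rule matrix_vector_mult_cancel[OF P_inv, symmetric])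
  also have "\<dots> \<longleftrightarrow> \<nu>1 = E *v \<nu>0 + ((E - mat 1) ** Fi) *v F"
    by (simp add: matrix_vector_mul_assoc matrix_vector_right_distrib P_Q P_P
        matrix_vector_mult_scaleR flip: P_Fi_Sh scaleR_matrix_vector_assoc)
  finally show ?thesis by (simp add: \<theta>_def E_def Fi_def A_def)
qed

lemma distinct_coords: "distinct (coords :: ('m::{finite,linorder} + 'm) list)"
  unfolding coords_def by (auto simp: distinct_map inj_on_def)

lemma set_coords: "set (coords :: ('m::{finite,linorder} + 'm) list) = UNIV"
proof -
  have "c \<in> set (coords :: ('m + 'm) list)" for c
    by (cases c) (auto simp: coords_def)
  then show ?thesis by auto
qed

lemma sum_coords:
  fixes f :: "('m::{finite,linorder} + 'm) \<Rightarrow> 'a::comm_monoid_add"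
  shows "(\<Sum>k<length (coords :: ('m + 'm) list). f (coords ! k)) = (\<Sum>c\<in>UNIV. f c)"
proof -
  have "(\<Sum>k<length (coords :: ('m + 'm) list). f (coords ! k)) = sum_list (map f coords)"
    by (simp add: sum_list_sum_nth atLeast0LessThan)
  also have "\<dots> = (\<Sum>c\<in>UNIV. f c)"
    by (simp add: sum_list_distinct_conv_sum_set[OF distinct_coords] set_coords)
  finally show ?thesis .
qed

lemma vec_eq_sum_axis: "(\<chi> c. f c) = (\<Sum>c\<in>UNIV. f c *\<^sub>R axis c (1::real))"
  by (simp add: vec_eq_iff axis_def if_distrib cong: if_cong)

lemma sum_coords_axis:
  fixes f :: "('m::{finite,linorder} + 'm) \<Rightarrow> real"
  shows "(\<Sum>k<length (coords :: ('m + 'm) list). f (coords ! k) *\<^sub>R axis (coords ! k) 1) = (\<chi> c. f c)"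
  using sum_coords[of "\<lambda>c. f c *\<^sub>R axis c 1"] by (simp add: vec_eq_sum_axis)

lemma nth_coords_notin_take:
  assumes "k < length (coords :: ('m::{finite,linorder} + 'm) list)"
  shows "(coords ! k :: 'm + 'm) \<notin> set (take k coords)"
  using assms distinct_coords by (metis distinct_take id_take_nth_drop not_distinct_conv_prefix)

lemma yhat_Suc:
  fixes a b :: "real^('m::{finite,linorder} + 'm)"
  assumes "k < length (coords :: ('m + 'm) list)"
  shows "yhat (Suc k) a b = yhat k a b + (b $ (coords ! k) - a $ (coords ! k)) *\<^sub>R axis (coords ! k) 1"
  using nth_coords_notin_take[OF assms]
  by (auto simp: yhat_def vec_eq_iff take_Suc_conv_app_nth[OF assms] axis_def)

lemma yhat_same [simp]: "yhat k a a = a"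
  by (simp add: yhat_def vec_eq_iff)

lemma yhat_add_yhat_swap: "yhat k a b + yhat k b a = a + b"
  by (simp add: yhat_def vec_eq_iff)

lemma yhat_diff: "yhat k a b - yhat k a' b' = yhat k (a - a') (b - b')"
  by (simp add: yhat_def vec_eq_iff)

lemma bounded_linear_yhat:
  "bounded_linear (\<lambda>z. yhat k (fst z) (snd z) :: real^('m::{finite,linorder} + 'm))"
  "bounded_linear (\<lambda>z. yhat k (snd z) (fst z) :: real^('m::{finite,linorder} + 'm))"
  by (auto intro!: linearI simp: yhat_def vec_eq_iff simp flip: linear_conv_bounded_linear)

lemma norm_yhat_le:
  fixes u v :: "real^('m::{finite,linorder} + 'm)"
  shows "norm (yhat k u v) \<le> norm u + norm v"
proof -
  let ?T = "set (take k (coords :: ('m + 'm) list))"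
  have "yhat k u v = (\<chi> d. if d \<in> ?T then 0 else u $ d) + (\<chi> d. if d \<in> ?T then v $ d else 0)"
    by (simp add: yhat_def vec_eq_iff)
  also have "norm \<dots> \<le> norm u + norm v"
    by (intro norm_triangle_le add_mono norm_le_componentwise_cart) auto
  finally show ?thesis .
qed

section \<open>The discrete gradient near the diagonal\<close>

lemma smooth_differentiable_iter_partial: "smooth H \<Longrightarrow> iter_partial cs H differentiable (at y)"
  by (simp add: smooth_def)

lemma has_real_derivative_along_axis:
  fixes G :: "real^'n::finite \<Rightarrow> real"
  assumes "\<And>y. G differentiable (at y)"
  shows "((\<lambda>s. G (p + s *\<^sub>R axis c 1)) has_real_derivative partial G c (p + s *\<^sub>R axis c 1)) (at s)"
proof -
  let ?q = "p + s *\<^sub>R axis c 1"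
  let ?G' = "frechet_derivative G (at ?q)"
  have dG: "(G has_derivative ?G') (at ?q)" using assms frechet_derivative_works by blast
  have "((\<lambda>s. p + s *\<^sub>R axis c 1) has_derivative (\<lambda>t. t *\<^sub>R axis c 1)) (at s)"
    by (auto intro!: derivative_eq_intros)
  from has_derivative_compose[OF this dG]
  have "((\<lambda>s. G (p + s *\<^sub>R axis c 1)) has_derivative (\<lambda>t. ?G' (t *\<^sub>R axis c 1))) (at s)" .
  moreover have "(\<lambda>t. ?G' (t *\<^sub>R axis c 1)) = (*) (partial G c ?q)"
    using linear_scale[OF has_derivative_linear[OF dG]] by (auto simp: partial_def mult.commute)
  ultimately show ?thesis by (simp add: has_field_derivative_def)
qed

lemma taylor2_along_axis:
  fixes H :: "real^'n::finite \<Rightarrow> real"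
  assumes "smooth H"
  obtains t where "\<bar>t\<bar> \<le> \<bar>\<delta>\<bar>"
    "H (p + \<delta> *\<^sub>R axis c 1) - H p
       = \<delta> * partial H c p + \<delta>\<^sup>2 / 2 * iter_partial [c, c] H (p + t *\<^sub>R axis c 1)"
proof (cases "\<delta> = 0")
  case True then show ?thesis by (intro that[of 0]) simp_all
next
  case False
  define diff where "diff m = (\<lambda>s. iter_partial (replicate m c) H (p + s *\<^sub>R axis c 1))" for m
  have D: "\<forall>m s. (diff m has_real_derivative diff (Suc m) s) (at s)"
    unfolding diff_def
    using has_real_derivative_along_axis[OF smooth_differentiable_iter_partial[OF assms]] by simp
  obtain t where "0 < \<bar>t\<bar>" "\<bar>t\<bar> < \<bar>\<delta>\<bar>"
    "diff 0 \<delta> = (\<Sum>m<2. diff m 0 / fact m * \<delta> ^ m) + diff 2 t / fact 2 * \<delta> ^ 2"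
    using Maclaurin_all_lt[OF refl _ False D, of 2] by auto
  then show ?thesis
    by (intro that[of t]) (auto simp: diff_def numeral_2_eq_2 algebra_simps)
qed

definition dgrad_comp :: "(real^('m::{finite,linorder} + 'm) \<Rightarrow> real) \<Rightarrow> nat
     \<Rightarrow> real^('m + 'm) \<Rightarrow> real^('m + 'm) \<Rightarrow> real" where
  "dgrad_comp H k a b = (let c = coords ! k in
       (if b $ c \<noteq> a $ c
        then (H (yhat (Suc k) a b) - H (yhat k a b)) / (b $ c - a $ c)
        else partial H c (yhat k a b)))"

lemma dgrad_eq_sum_dgrad_comp:
  fixes H :: "real^('m::{finite,linorder} + 'm) \<Rightarrow> real"
  shows "dgrad H a b = (\<Sum>k<length (coords::('m + 'm) list). dgrad_comp H k a b *\<^sub>R axis (coords ! k) 1)"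
  unfolding dgrad_def dgrad_comp_def by simp

lemma dgrad_comp_same: "dgrad_comp H k y y = partial H (coords ! k) y"
  by (simp add: dgrad_comp_def Let_def)

lemma dgrad_comp_taylor2:
  fixes H :: "real^('m::{finite,linorder} + 'm) \<Rightarrow> real"
  assumes smooth: "smooth H" and k: "k < length (coords :: ('m + 'm) list)"
  defines "c \<equiv> coords ! k"
  obtains \<xi> where "norm (\<xi> - yhat k a b) \<le> \<bar>b $ c - a $ c\<bar>"
    "dgrad_comp H k a b = partial H c (yhat k a b) + (b $ c - a $ c) / 2 * iter_partial [c, c] H \<xi>"
proof (cases "b $ c = a $ c")
  case True
  then show ?thesis by (intro that[of "yhat k a b"]) (simp_all add: dgrad_comp_def c_def Let_def)
next
  case False
  define \<delta> where "\<delta> = b $ c - a $ c"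
  have "\<delta> \<noteq> 0" using False by (simp add: \<delta>_def)
  obtain t where t: "\<bar>t\<bar> \<le> \<bar>\<delta>\<bar>" and taylor: "H (yhat k a b + \<delta> *\<^sub>R axis c 1) - H (yhat k a b)
     = \<delta> * partial H c (yhat k a b) + \<delta>\<^sup>2 / 2 * iter_partial [c, c] H (yhat k a b + t *\<^sub>R axis c 1)"
    using taylor2_along_axis[OF smooth] by blast
  have "dgrad_comp H k a b = (H (yhat k a b + \<delta> *\<^sub>R axis c 1) - H (yhat k a b)) / \<delta>"
    using False by (simp add: dgrad_comp_def Let_def c_def[symmetric] yhat_Suc[OF k] \<delta>_def)
  also have "\<dots> = partial H c (yhat k a b) + \<delta> / 2 * iter_partial [c, c] H (yhat k a b + t *\<^sub>R axis c 1)"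
    using \<open>\<delta> \<noteq> 0\<close> by (simp add: taylor field_simps power2_eq_square)
  finally show ?thesis
    using t by (intro that[of "yhat k a b + t *\<^sub>R axis c 1"]) (simp_all add: \<delta>_def)
qed

lemma dgrad_comp_sym_remainder_le:
  fixes H :: "real^('m::{finite,linorder} + 'm) \<Rightarrow> real"
  assumes smooth: "smooth H" and k: "k < length (coords :: ('m + 'm) list)"
    and r: "norm ((a, b) - (ybar, ybar)) \<le> r"
  defines "c \<equiv> coords ! k"
  obtains \<xi>1 \<xi>2 where "norm (\<xi>1 - ybar) \<le> 4 * r" "norm (\<xi>2 - ybar) \<le> 4 * r"
    "\<bar>dgrad_comp H k a b + dgrad_comp H k b a - (partial H c (yhat k a b) + partial H c (yhat k b a))\<bar>
       \<le> r * \<bar>iter_partial [c, c] H \<xi>1 - iter_partial [c, c] H \<xi>2\<bar>"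
proof -
  let ?q = "iter_partial [c, c] H"
  have ra: "norm (a - ybar) \<le> r" and rb: "norm (b - ybar) \<le> r"
    using r norm_fst_le[of "a - ybar" "b - ybar"] norm_snd_le[of "b - ybar" "a - ybar"] by simp_all
  define \<delta> where "\<delta> = b $ c - a $ c"
  have "\<bar>\<delta>\<bar> \<le> \<bar>(b - ybar) $ c\<bar> + \<bar>(a - ybar) $ c\<bar>"
    unfolding \<delta>_def by (rule order_trans[OF _ abs_triangle_ineq4]) simp
  then have \<delta>_le: "\<bar>\<delta>\<bar> \<le> 2 * r"
    using ra rb component_le_norm_cart[of "b - ybar" c] component_le_norm_cart[of "a - ybar" c]
    by linarith
  have yhat_near: "norm (yhat k u v - ybar) \<le> 2 * r"
    if "norm (u - ybar) \<le> r" "norm (v - ybar) \<le> r" for u v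
    using norm_yhat_le[of k "u - ybar" "v - ybar"] yhat_diff[of k u v ybar ybar] that by simp
  obtain \<xi>1 where \<xi>1: "norm (\<xi>1 - yhat k a b) \<le> \<bar>b $ c - a $ c\<bar>"
      "dgrad_comp H k a b = partial H c (yhat k a b) + (b $ c - a $ c) / 2 * ?q \<xi>1"
    unfolding c_def by (rule dgrad_comp_taylor2[OF smooth k])
  obtain \<xi>2 where \<xi>2: "norm (\<xi>2 - yhat k b a) \<le> \<bar>a $ c - b $ c\<bar>"
      "dgrad_comp H k b a = partial H c (yhat k b a) + (a $ c - b $ c) / 2 * ?q \<xi>2"
    unfolding c_def by (rule dgrad_comp_taylor2[OF smooth k])
  show ?thesis
  proof (rule that)
    show "norm (\<xi>1 - ybar) \<le> 4 * r"
      using norm_diff_triangle_le[OF \<xi>1(1) yhat_near[OF ra rb]] \<delta>_le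
      unfolding \<delta>_def by linarith
    show "norm (\<xi>2 - ybar) \<le> 4 * r"
      using norm_diff_triangle_le[OF \<xi>2(1) yhat_near[OF rb ra]] \<delta>_le
      unfolding \<delta>_def by (simp add: abs_minus_commute)
    have remainder_eq: "dgrad_comp H k a b + dgrad_comp H k b a
        - (partial H c (yhat k a b) + partial H c (yhat k b a)) = \<delta> / 2 * (?q \<xi>1 - ?q \<xi>2)"
      unfolding \<xi>1(2) \<xi>2(2) \<delta>_def by (simp add: field_simps)
    show "\<bar>dgrad_comp H k a b + dgrad_comp H k b a
        - (partial H c (yhat k a b) + partial H c (yhat k b a))\<bar> \<le> r * \<bar>?q \<xi>1 - ?q \<xi>2\<bar>"
      unfolding remainder_eq abs_mult using \<delta>_le by (intro mult_right_mono) auto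
  qed
qed

lemma has_derivative_dgrad_comp_sym_remainder:
  fixes H :: "real^('m::{finite,linorder} + 'm) \<Rightarrow> real" and ybar :: "real^('m + 'm)"
  assumes smooth: "smooth H" and k: "k < length (coords :: ('m + 'm) list)"
  defines "c \<equiv> coords ! k"
  shows "((\<lambda>(a, b). dgrad_comp H k a b + dgrad_comp H k b a
      - (partial H c (yhat k a b) + partial H c (yhat k b a))) has_derivative (\<lambda>_. 0)) (at (ybar, ybar))"
  unfolding has_derivative_at_alt
proof (intro conjI bounded_linear_zero allI impI)
  fix e :: real assume e: "0 < e"
  let ?R = "\<lambda>(a, b). dgrad_comp H k a b + dgrad_comp H k b a
      - (partial H c (yhat k a b) + partial H c (yhat k b a))"
  let ?q = "iter_partial [c, c] H"
  have "continuous (at ybar) ?q"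
    using smooth_differentiable_iter_partial[OF smooth] differentiable_imp_continuous_within by blast
  then obtain d where d: "d > 0" "\<And>x. dist x ybar < d \<Longrightarrow> dist (?q x) (?q ybar) < e / 2"
    unfolding continuous_at_eps_delta using e by (metis half_gt_zero)
  show "\<exists>d>0. \<forall>z. norm (z - (ybar, ybar)) < d
      \<longrightarrow> norm (?R z - ?R (ybar, ybar) - 0) \<le> e * norm (z - (ybar, ybar))"
  proof (intro exI[of _ "d / 4"] conjI allI impI)
    show "0 < d / 4" using d by simp
    fix z :: "(real^('m + 'm)) \<times> (real^('m + 'm))"
    assume z: "norm (z - (ybar, ybar)) < d / 4"
    obtain a b where ab: "z = (a, b)" by (cases z)
    define r where "r = norm (z - (ybar, ybar))"
    obtain \<xi>1 \<xi>2 where "norm (\<xi>1 - ybar) \<le> 4 * r" "norm (\<xi>2 - ybar) \<le> 4 * r"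
      and R_le: "\<bar>?R z\<bar> \<le> r * \<bar>?q \<xi>1 - ?q \<xi>2\<bar>"
      using dgrad_comp_sym_remainder_le[OF smooth k, of a b ybar r] by (auto simp: ab r_def c_def)
    then have "\<bar>?q \<xi>1 - ?q ybar\<bar> < e / 2" "\<bar>?q \<xi>2 - ?q ybar\<bar> < e / 2"
      using d(2)[of \<xi>1] d(2)[of \<xi>2] z by (simp_all add: dist_norm r_def)
    then have "\<bar>?q \<xi>1 - ?q \<xi>2\<bar> \<le> e" by linarith
    then have "r * \<bar>?q \<xi>1 - ?q \<xi>2\<bar> \<le> r * e"
      by (intro mult_left_mono) (auto simp: r_def)
    with R_le have "\<bar>?R z\<bar> \<le> r * e" by linarith
    then show "norm (?R z - ?R (ybar, ybar) - 0) \<le> e * norm (z - (ybar, ybar))"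
      by (simp add: dgrad_comp_same c_def r_def mult.commute)
  qed
qed

lemma has_derivative_dgrad_comp_sym:
  fixes H :: "real^('m::{finite,linorder} + 'm) \<Rightarrow> real" and ybar :: "real^('m + 'm)"
  assumes smooth: "smooth H" and k: "k < length (coords :: ('m + 'm) list)"
  defines "c \<equiv> coords ! k"
  shows "((\<lambda>(a, b). dgrad_comp H k a b + dgrad_comp H k b a) has_derivative
           (\<lambda>(u, v). frechet_derivative (partial H c) (at ybar) (u + v))) (at (ybar, ybar))"
proof -
  let ?g = "partial H c"
  let ?g' = "frechet_derivative ?g (at ybar)"
  have "?g differentiable (at ybar)"
    using smooth_differentiable_iter_partial[OF smooth, of "[c]"] by simp
  then have dg: "(?g has_derivative ?g') (at ybar)" using frechet_derivative_works by blast
  have "((\<lambda>z. yhat k (fst z) (snd z)) has_derivative (\<lambda>z. yhat k (fst z) (snd z))) (at (ybar, ybar))"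
    using bounded_linear_yhat(1) by (rule bounded_linear_imp_has_derivative)
  from has_derivative_compose[OF this, of ?g ?g'] dg
  have "((\<lambda>z. ?g (yhat k (fst z) (snd z))) has_derivative (\<lambda>z. ?g' (yhat k (fst z) (snd z))))
      (at (ybar, ybar))"
    by simp
  moreover have "((\<lambda>z. yhat k (snd z) (fst z)) has_derivative (\<lambda>z. yhat k (snd z) (fst z))) (at (ybar, ybar))"
    using bounded_linear_yhat(2) by (rule bounded_linear_imp_has_derivative)
  from has_derivative_compose[OF this, of ?g ?g'] dg
  have "((\<lambda>z. ?g (yhat k (snd z) (fst z))) has_derivative (\<lambda>z. ?g' (yhat k (snd z) (fst z))))
      (at (ybar, ybar))"
    by simp
  ultimately have "((\<lambda>z. (?g (yhat k (fst z) (snd z)) + ?g (yhat k (snd z) (fst z)))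
        + (\<lambda>(a, b). dgrad_comp H k a b + dgrad_comp H k b a
           - (?g (yhat k a b) + ?g (yhat k b a))) z) has_derivative
      (\<lambda>z. (?g' (yhat k (fst z) (snd z)) + ?g' (yhat k (snd z) (fst z))) + 0)) (at (ybar, ybar))"
    by (intro has_derivative_add has_derivative_dgrad_comp_sym_remainder[OF smooth k, unfolded c_def[symmetric]])
  moreover have "?g' (yhat k u v) + ?g' (yhat k v u) = ?g' (u + v)" for u v
    using linear_add[OF has_derivative_linear[OF dg], symmetric] by (simp add: yhat_add_yhat_swap)
  ultimately show ?thesis by (simp add: split_def)
qed

lemma dgrad_s_eq_sum_dgrad_comp:
  fixes H :: "real^('m::{finite,linorder} + 'm) \<Rightarrow> real"
  shows "dgrad_s H a b = (1/2) *\<^sub>R (\<Sum>k<length (coords::('m + 'm) list).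
      (dgrad_comp H k a b + dgrad_comp H k b a) *\<^sub>R axis (coords ! k) 1)"
  by (simp add: dgrad_s_def dgrad_eq_sum_dgrad_comp sum.distrib scaleR_add_left)

lemma dgrad_s_same:
  fixes H :: "real^('m::{finite,linorder} + 'm) \<Rightarrow> real"
  shows "dgrad_s H y y = grad H y"
proof -
  have "dgrad_s H y y = (\<Sum>k<length (coords::('m + 'm) list). partial H (coords ! k) y *\<^sub>R axis (coords ! k) 1)"
    by (simp add: dgrad_s_eq_sum_dgrad_comp dgrad_comp_same scaleR_sum_right)
  then show ?thesis
    by (simp add: sum_coords_axis[of "\<lambda>c. partial H c y"] grad_def)
qed

lemma hessian_mult_vector:
  fixes H :: "real^'n::finite \<Rightarrow> real"
  assumes smooth: "smooth H"
  shows "hessian H y *v w = (\<chi> c. frechet_derivative (partial H c) (at y) w)"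
proof -
  have "(partial H c has_derivative frechet_derivative (partial H c) (at y)) (at y)" for c
    using smooth_differentiable_iter_partial[OF smooth, of "[c]"] frechet_derivative_works by force
  then have "((\<lambda>y. \<Sum>c\<in>UNIV. partial H c y *\<^sub>R axis c 1) has_derivative
      (\<lambda>w. \<Sum>c\<in>UNIV. frechet_derivative (partial H c) (at y) w *\<^sub>R axis c 1)) (at y)"
    by (intro has_derivative_sum has_derivative_scaleR_left)
  then have d: "(grad H has_derivative (\<lambda>w. \<chi> c. frechet_derivative (partial H c) (at y) w)) (at y)"
    by (simp add: grad_def[abs_def] vec_eq_sum_axis)
  then have "(grad H has_derivative (\<lambda>w. jacobian (grad H) (at y) *v w)) (at y)"
    using jacobian_works differentiableI by blast
  from has_derivative_unique[OF d this] show ?thesis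
    unfolding hessian_def by metis
qed

lemma has_derivative_dgrad_s_diagonal:
  fixes H :: "real^('m::{finite,linorder} + 'm) \<Rightarrow> real" and ybar :: "real^('m + 'm)"
  assumes smooth: "smooth H"
  shows "((\<lambda>(a, b). dgrad_s H a b) has_derivative
     (\<lambda>(u, v). (1/2) *\<^sub>R (hessian H ybar *v (u + v)))) (at (ybar, ybar))"
proof -
  have hessian_eq: "(\<Sum>k<length (coords::('m + 'm) list).
      frechet_derivative (partial H (coords ! k)) (at ybar) w *\<^sub>R axis (coords ! k) 1)
      = hessian H ybar *v w" for w
    by (simp add: hessian_mult_vector[OF smooth]
        sum_coords_axis[of "\<lambda>c. frechet_derivative (partial H c) (at ybar) w"])
  have "((\<lambda>(a, b). (1/2) *\<^sub>R (\<Sum>k<length (coords::('m + 'm) list).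
      (dgrad_comp H k a b + dgrad_comp H k b a) *\<^sub>R axis (coords ! k) (1::real))) has_derivative
     (\<lambda>(u, v). (1/2) *\<^sub>R (\<Sum>k<length (coords::('m + 'm) list).
      frechet_derivative (partial H (coords ! k)) (at ybar) (u + v) *\<^sub>R axis (coords ! k) (1::real))))
     (at (ybar, ybar))"
    unfolding case_prod_beta'
    using has_derivative_dgrad_comp_sym[OF smooth, of _ ybar]
    by (intro has_derivative_scaleR_right has_derivative_sum has_derivative_scaleR_left)
       (simp_all add: case_prod_beta')
  then show ?thesis
    unfolding dgrad_s_eq_sum_dgrad_comp case_prod_beta'
    by (rule has_derivative_eq_rhs) (simp add: hessian_eq)
qed

theorem proposition6p8:
  fixes H :: "real^('m::{finite,linorder} + 'm) \<Rightarrow> real"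
    and ybar :: "real^('m + 'm)"
    and h :: real
  defines "F' \<equiv> Smat ** hessian H ybar"
  defines "F \<equiv> Smat *v grad H ybar"
  defines "\<theta> \<equiv> 2 *\<^sub>R (matrix_inv F' ** mtanh ((h / 2) *\<^sub>R F'))"
  assumes smooth: "smooth H"
    and inv: "invertible F'"
    and hpos: "0 < h"
    and cosh_inv: "invertible (mcosh ((h / 2) *\<^sub>R F'))"
  shows "(\<lambda>(a, b). dgrad_s H a b) differentiable (at (ybar, ybar))
       \<and> (\<forall>\<nu>0 \<nu>1. (\<nu>1 - \<nu>0 = \<theta> *v (Smat *v (dgrad_s H ybar ybar
              + frechet_derivative (\<lambda>(a, b). dgrad_s H a b) (at (ybar, ybar)) (\<nu>0, \<nu>1))))
           \<longleftrightarrow> \<nu>1 = mexp (h *\<^sub>R F') *v \<nu>0 + ((mexp (h *\<^sub>R F') - mat 1) ** matrix_inv F') *v F)"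
proof -
  note deriv = has_derivative_dgrad_s_diagonal[OF smooth, of ybar]
  have linearised: "Smat *v (dgrad_s H ybar ybar
        + frechet_derivative (\<lambda>(a, b). dgrad_s H a b) (at (ybar, ybar)) (\<nu>0, \<nu>1))
      = F + (1/2) *\<^sub>R (F' *v (\<nu>0 + \<nu>1))" for \<nu>0 \<nu>1
    by (simp add: frechet_derivative_at[OF deriv, symmetric] dgrad_s_same F_def F'_def
        matrix_vector_right_distrib matrix_vector_mult_scaleR matrix_vector_mul_assoc)
  show ?thesis
    using deriv tanh_midpoint_step_iff_exact_step[OF inv cosh_inv]
    by (auto simp: differentiable_def linearised \<theta>_def)
qed

end
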